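(* There is an absolute constant $C$ such that the following holds. Let $p$ be a real polynomial in $n$ variables of degree $d$ whose Hessian determinant $h_p(x)=\det(\nabla^2 p(x))$ is not identically zero. Then there is $a\in\mathbb{Z}^n$ with $\mathrm{bl}(a)\le C\, n\log(dn)$ such that $h_p(a)\neq0$.
   Context: For an integer $k$, $\mathrm{bl}(k)=\max\{1,\lceil\log_2|k|\rceil\}$; the bit length of an integer vector is the sum of the bit lengths of its entries. *)

theory Defs
  imports Complex_Main "HOL-Combinatorics.Permutations"
begin

text \<open>A real polynomial in the variables x_0, ..., x_(n-1) is represented by its
coefficient function on exponent vectors (monomials) alpha :: nat => nat.\<close>

definition is_mpoly :: "nat \<Rightarrow> ((nat \<Rightarrow> nat) \<Rightarrow> real) \<Rightarrow> bool" where
  "is_mpoly n c \<longleftrightarrow> finite {\<alpha>. c \<alpha> \<noteq> 0} \<and> (\<forall>\<alpha>. c \<alpha> \<noteq> 0 \<longrightarrow> (\<forall>i\<ge>n. \<alpha> i = 0))"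

definition mpoly_deg :: "nat \<Rightarrow> ((nat \<Rightarrow> nat) \<Rightarrow> real) \<Rightarrow> nat" where
  "mpoly_deg n c = Max (insert 0 {(\<Sum>i<n. \<alpha> i) | \<alpha>. c \<alpha> \<noteq> 0})"

definition mpoly_eval :: "nat \<Rightarrow> ((nat \<Rightarrow> nat) \<Rightarrow> real) \<Rightarrow> (nat \<Rightarrow> real) \<Rightarrow> real" where
  "mpoly_eval n c x = (\<Sum>\<alpha>\<in>{\<alpha>. c \<alpha> \<noteq> 0}. c \<alpha> * (\<Prod>i<n. x i ^ \<alpha> i))"

definition mpoly_pderiv :: "nat \<Rightarrow> ((nat \<Rightarrow> nat) \<Rightarrow> real) \<Rightarrow> ((nat \<Rightarrow> nat) \<Rightarrow> real)" where
  "mpoly_pderiv j c = (\<lambda>\<alpha>. real (Suc (\<alpha> j)) * c (\<alpha>(j := Suc (\<alpha> j))))"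

definition hessian_det :: "nat \<Rightarrow> ((nat \<Rightarrow> nat) \<Rightarrow> real) \<Rightarrow> (nat \<Rightarrow> real) \<Rightarrow> real" where
  "hessian_det n c x =
     (\<Sum>\<sigma>\<in>{\<sigma>. \<sigma> permutes {..<n}}. of_int (sign \<sigma>) *
        (\<Prod>i<n. mpoly_eval n (mpoly_pderiv i (mpoly_pderiv (\<sigma> i) c)) x))"

definition bl :: "int \<Rightarrow> int" where
  "bl k = max 1 \<lceil>log 2 \<bar>real_of_int k\<bar>\<rceil>"

definition bl_vec :: "nat \<Rightarrow> (nat \<Rightarrow> int) \<Rightarrow> int" where
  "bl_vec n a = (\<Sum>i<n. bl (a i))"

end

theory Submission
  imports Defs "HOL-Computational_Algebra.Polynomial"
begin

text \<open>The Hessian determinant is a polynomial of degree at most \<open>n (d - 2)\<close> in each single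
variable, and a nonzero univariate polynomial of degree at most \<open>D\<close> cannot vanish on all of
\<open>1, \<dots>, D + 1\<close>. Replacing the coordinates of a non-root one at a time by such integers therefore
yields a non-root in \<open>{1, \<dots>, n d}\<^sup>n\<close>, whose bit length is at most \<open>n (log\<^sub>2 (d n) + 1)\<close>.\<close>

definition coordwise_degree_le :: "nat \<Rightarrow> (('i \<Rightarrow> real) \<Rightarrow> real) \<Rightarrow> bool" where
  "coordwise_degree_le D f \<longleftrightarrow>
     (\<forall>x i. \<exists>p. degree p \<le> D \<and> (\<forall>t. f (x(i := t)) = poly p t))"

lemma coordwise_degree_le_const: "coordwise_degree_le D (\<lambda>x. k)"
  unfolding coordwise_degree_le_def by (intro allI exI[of _ "[:k:]"]) auto

lemma coordwise_degree_le_mono: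
  "coordwise_degree_le D f \<Longrightarrow> D \<le> D' \<Longrightarrow> coordwise_degree_le D' f"
  unfolding coordwise_degree_le_def by (meson order_trans)

lemma coordwise_degree_le_add:
  assumes "coordwise_degree_le D f" "coordwise_degree_le D g"
  shows "coordwise_degree_le D (\<lambda>x. f x + g x)"
  unfolding coordwise_degree_le_def
proof (intro allI)
  fix x i
  obtain p where p: "degree p \<le> D" "\<forall>t. f (x(i := t)) = poly p t"
    using assms(1) unfolding coordwise_degree_le_def by blast
  obtain q where q: "degree q \<le> D" "\<forall>t. g (x(i := t)) = poly q t"
    using assms(2) unfolding coordwise_degree_le_def by blast
  show "\<exists>r. degree r \<le> D \<and> (\<forall>t. f (x(i := t)) + g (x(i := t)) = poly r t)"
    using p q degree_add_le by (intro exI[of _ "p + q"]) auto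
qed

lemma coordwise_degree_le_mult:
  assumes "coordwise_degree_le D f" "coordwise_degree_le E g"
  shows "coordwise_degree_le (D + E) (\<lambda>x. f x * g x)"
  unfolding coordwise_degree_le_def
proof (intro allI)
  fix x i
  obtain p where p: "degree p \<le> D" "\<forall>t. f (x(i := t)) = poly p t"
    using assms(1) unfolding coordwise_degree_le_def by blast
  obtain q where q: "degree q \<le> E" "\<forall>t. g (x(i := t)) = poly q t"
    using assms(2) unfolding coordwise_degree_le_def by blast
  have "degree (p * q) \<le> D + E"
    using p(1) q(1) degree_mult_le[of p q] by linarith
  then show "\<exists>r. degree r \<le> D + E \<and> (\<forall>t. f (x(i := t)) * g (x(i := t)) = poly r t)"
    using p(2) q(2) by (intro exI[of _ "p * q"]) auto
qed

lemma coordwise_degree_le_sum: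
  assumes "\<And>a. a \<in> A \<Longrightarrow> coordwise_degree_le D (g a)"
  shows "coordwise_degree_le D (\<lambda>x. \<Sum>a\<in>A. g a x)"
proof (cases "finite A")
  case True
  then show ?thesis using assms
  proof (induction A rule: finite_induct)
    case empty
    then show ?case using coordwise_degree_le_const[of D 0] by simp
  next
    case (insert a A)
    then show ?case by (simp add: coordwise_degree_le_add)
  qed
next
  case False
  then show ?thesis using coordwise_degree_le_const[of D 0] by simp
qed

lemma coordwise_degree_le_prod:
  assumes "finite A" "\<And>a. a \<in> A \<Longrightarrow> coordwise_degree_le (E a) (g a)"
  shows "coordwise_degree_le (\<Sum>a\<in>A. E a) (\<lambda>x. \<Prod>a\<in>A. g a x)"
  using assms
proof (induction A rule: finite_induct)
  case empty
  then show ?case using coordwise_degree_le_const[of 0 1] by simp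
next
  case (insert a A)
  then show ?case by (simp add: coordwise_degree_le_mult)
qed

lemma coordwise_degree_le_var_power:
  fixes k :: 'i
  shows "coordwise_degree_le m (\<lambda>x. x k ^ m)"
  unfolding coordwise_degree_le_def
proof (intro allI)
  fix x :: "'i \<Rightarrow> real" and i
  show "\<exists>p. degree p \<le> m \<and> (\<forall>t. (x(i := t)) k ^ m = poly p t)"
  proof (cases "k = i")
    case True
    then show ?thesis
      by (intro exI[of _ "monom 1 m"]) (simp add: degree_monom_le poly_monom)
  next
    case False
    then show ?thesis by (intro exI[of _ "[:x k ^ m:]"]) auto
  qed
qed

lemma coordwise_degree_le_mpoly_eval:
  assumes "\<And>\<alpha>. c \<alpha> \<noteq> 0 \<Longrightarrow> (\<Sum>k<n. \<alpha> k) \<le> D"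
  shows "coordwise_degree_le D (mpoly_eval n c)"
proof -
  have "coordwise_degree_le D (\<lambda>x. c \<alpha> * (\<Prod>k<n. x k ^ \<alpha> k))" if "c \<alpha> \<noteq> 0" for \<alpha>
  proof -
    have "coordwise_degree_le (0 + (\<Sum>k<n. \<alpha> k)) (\<lambda>x. c \<alpha> * (\<Prod>k<n. x k ^ \<alpha> k))"
      by (intro coordwise_degree_le_mult coordwise_degree_le_const coordwise_degree_le_prod
          coordwise_degree_le_var_power) simp
    then show ?thesis using assms[OF that] coordwise_degree_le_mono by simp
  qed
  then show ?thesis
    unfolding mpoly_eval_def[abs_def] by (intro coordwise_degree_le_sum) simp
qed

lemma poly_nonzero_at_small_nat:
  fixes p :: "real poly"
  assumes "p \<noteq> 0" "degree p \<le> D"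
  obtains m :: nat where "m \<in> {1..D + 1}" "poly p (real m) \<noteq> 0"
proof -
  have "\<not> real ` {1..D + 1} \<subseteq> {x. poly p x = 0}"
  proof
    assume roots: "real ` {1..D + 1} \<subseteq> {x. poly p x = 0}"
    have "D + 1 = card (real ` {1..D + 1})" by (simp add: card_image)
    also have "\<dots> \<le> card {x. poly p x = 0}"
      using card_mono[OF poly_roots_finite[OF assms(1)] roots] .
    also have "\<dots> \<le> degree p" using card_poly_roots_bound[OF assms(1)] .
    finally show False using assms(2) by simp
  qed
  then show thesis using that by blast
qed

lemma coordwise_degree_le_nonzero_at_small_nat_point:
  assumes "coordwise_degree_le D f" "f x \<noteq> 0" "finite I"
  shows "\<exists>y. f y \<noteq> 0 \<and> (\<forall>i\<in>I. y i \<in> real ` {1..D + 1})"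
  using assms(3)
proof (induction I rule: finite_induct)
  case empty
  then show ?case using assms(2) by blast
next
  case (insert i I)
  then obtain y where y: "f y \<noteq> 0" "\<forall>j\<in>I. y j \<in> real ` {1..D + 1}" by blast
  obtain p where p: "degree p \<le> D" "\<And>t. f (y(i := t)) = poly p t"
    using assms(1) unfolding coordwise_degree_le_def by blast
  have "p \<noteq> 0" using y(1) p(2)[of "y i"] by auto
  then obtain m :: nat where "m \<in> {1..D + 1}" "f (y(i := real m)) \<noteq> 0"
    using poly_nonzero_at_small_nat p by metis
  moreover have "\<forall>j\<in>insert i I. (y(i := real m)) j \<in> real ` {1..D + 1}"
    using y(2) \<open>m \<in> {1..D + 1}\<close> by simp
  ultimately show ?case by blast
qed

lemma mpoly_pderiv2_monomial_degree:
  assumes "is_mpoly n c" "i < n" "j < n" "mpoly_pderiv i (mpoly_pderiv j c) \<alpha> \<noteq> 0"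
  shows "(\<Sum>k<n. \<alpha> k) + 2 \<le> mpoly_deg n c"
proof -
  define \<beta> where "\<beta> k = \<alpha> k + (if k = i then 1 else 0) + (if k = j then 1 else 0)" for k
  have c\<beta>: "c \<beta> \<noteq> 0"
  proof -
    have "\<beta> = (\<alpha>(i := Suc (\<alpha> i)))(j := Suc ((\<alpha>(i := Suc (\<alpha> i))) j))"
      unfolding \<beta>_def by auto
    then show ?thesis using assms(4) by (simp add: mpoly_pderiv_def)
  qed
  have "(\<Sum>k<n. \<beta> k) = (\<Sum>k<n. \<alpha> k) + 2"
    using assms(2,3) by (simp add: \<beta>_def sum.distrib)
  moreover have "(\<Sum>k<n. \<beta> k) \<le> mpoly_deg n c"
  proof -
    have "finite {(\<Sum>k<n. \<gamma> k) | \<gamma>. c \<gamma> \<noteq> 0}"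
      using assms(1) unfolding is_mpoly_def by (simp add: setcompr_eq_image)
    then show ?thesis unfolding mpoly_deg_def using c\<beta> by (intro Max_ge) auto
  qed
  ultimately show ?thesis by simp
qed

lemma hessian_det_cong:
  assumes "\<And>i. i < n \<Longrightarrow> x i = y i"
  shows "hessian_det n c x = hessian_det n c y"
  unfolding hessian_det_def mpoly_eval_def using assms
  by (intro sum.cong refl arg_cong2[where f=times] prod.cong) auto

lemma coordwise_degree_le_hessian_det:
  assumes "is_mpoly n c"
  shows "coordwise_degree_le (n * (mpoly_deg n c - 2)) (hessian_det n c)"
proof -
  have entry: "coordwise_degree_le (mpoly_deg n c - 2) (mpoly_eval n (mpoly_pderiv i (mpoly_pderiv j c)))"
    if "i < n" "j < n" for i j
    using mpoly_pderiv2_monomial_degree[OF assms that]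
    by (intro coordwise_degree_le_mpoly_eval) fastforce
  have "coordwise_degree_le (0 + (\<Sum>i<n. mpoly_deg n c - 2))
          (\<lambda>x. of_int (sign \<sigma>) * (\<Prod>i<n. mpoly_eval n (mpoly_pderiv i (mpoly_pderiv (\<sigma> i) c)) x))"
    if "\<sigma> permutes {..<n}" for \<sigma>
    using that entry permutes_in_image[OF that]
    by (intro coordwise_degree_le_mult coordwise_degree_le_const coordwise_degree_le_prod) auto
  then show ?thesis
    unfolding hessian_det_def[abs_def] by (intro coordwise_degree_le_sum) (simp add: mult.commute)
qed

lemma hessian_det_nonzero_imp_deg_ge_2:
  assumes "is_mpoly n c" "0 < n" "hessian_det n c x \<noteq> 0"
  shows "2 \<le> mpoly_deg n c"
proof (rule ccontr)
  assume "\<not> 2 \<le> mpoly_deg n c"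
  then have zero: "mpoly_pderiv i (mpoly_pderiv j c) = (\<lambda>_. 0)" if "i < n" "j < n" for i j
    using mpoly_pderiv2_monomial_degree[OF assms(1) that] by fastforce
  have "(\<Prod>i<n. mpoly_eval n (mpoly_pderiv i (mpoly_pderiv (\<sigma> i) c)) x) = 0"
    if "\<sigma> permutes {..<n}" for \<sigma>
  proof (rule prod_zero)
    show "\<exists>i\<in>{..<n}. mpoly_eval n (mpoly_pderiv i (mpoly_pderiv (\<sigma> i) c)) x = 0"
      using assms(2) permutes_in_image[OF that, of 0] zero[of 0 "\<sigma> 0"]
      by (intro bexI[of _ 0]) (simp_all add: mpoly_eval_def)
  qed simp
  then have "hessian_det n c x = 0"
    unfolding hessian_det_def by (intro sum.neutral) (simp del: prod_zero_iff)
  then show False using assms(3) by simp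
qed

lemma hessian_det_nonzero_at_small_nat_point:
  assumes "is_mpoly n c" "hessian_det n c x \<noteq> 0"
  obtains m :: "nat \<Rightarrow> nat"
  where "\<And>i. i < n \<Longrightarrow> m i \<in> {1..n * (mpoly_deg n c - 2) + 1}"
    and "hessian_det n c (\<lambda>i. real (m i)) \<noteq> 0"
proof -
  let ?M = "{1..n * (mpoly_deg n c - 2) + 1}"
  have "\<exists>y. hessian_det n c y \<noteq> 0 \<and> (\<forall>i\<in>{..<n}. y i \<in> real ` ?M)"
    using coordwise_degree_le_nonzero_at_small_nat_point[OF
        coordwise_degree_le_hessian_det[OF assms(1)] assms(2) finite_lessThan] .
  then obtain y where y: "hessian_det n c y \<noteq> 0" "\<forall>i\<in>{..<n}. y i \<in> real ` ?M"
    by (elim exE conjE)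
  then have "\<forall>i\<in>{..<n}. \<exists>k. k \<in> ?M \<and> y i = real k"
    by (simp add: image_iff Bex_def)
  then obtain m where m: "\<forall>i\<in>{..<n}. m i \<in> ?M \<and> y i = real (m i)"
    by (rule bchoice[THEN exE])
  have "hessian_det n c (\<lambda>i. real (m i)) = hessian_det n c y"
    using m by (intro hessian_det_cong) auto
  then show thesis using m y(1) by (intro that[of m]) auto
qed

lemma bl_of_nat_le_twice_log:
  assumes "1 \<le> m" "m \<le> N" "2 \<le> N"
  shows "real_of_int (bl (int m)) \<le> 2 * log 2 N"
proof -
  have "log 2 m \<le> log 2 N" "1 \<le> log 2 N"
    using assms by simp_all
  then have "real_of_int \<lceil>log 2 m\<rceil> \<le> 2 * log 2 N"
    using of_int_ceiling_le_add_one[of "log 2 m"] by linarith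
  then show ?thesis using \<open>1 \<le> log 2 N\<close> by (simp add: bl_def of_int_max)
qed

theorem corollary4p6:
  shows "\<exists>C::real. \<forall>(n::nat) (d::nat) (c::(nat \<Rightarrow> nat) \<Rightarrow> real).
           is_mpoly n c \<and> mpoly_deg n c = d \<and> (\<exists>x. hessian_det n c x \<noteq> 0) \<longrightarrow>
           (\<exists>a::nat \<Rightarrow> int. (\<forall>i\<ge>n. a i = 0) \<and>
              real_of_int (bl_vec n a) \<le> C * real n * log 2 (real d * real n) \<and>
              hessian_det n c (\<lambda>i. real_of_int (a i)) \<noteq> 0)"
proof (intro exI[of _ 2] allI impI, elim conjE exE)
  fix n d c x
  assume c: "is_mpoly n c" and d: "mpoly_deg n c = d" and hx: "hessian_det n c x \<noteq> 0"
  obtain m where m: "\<And>i. i < n \<Longrightarrow> m i \<in> {1..n * (d - 2) + 1}"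
    and hm: "hessian_det n c (\<lambda>i. real (m i)) \<noteq> 0"
    using hessian_det_nonzero_at_small_nat_point[OF c hx] d by blast
  define a where "a i = (if i < n then int (m i) else 0)" for i
  have bl_a: "real_of_int (bl (a i)) \<le> 2 * log 2 (real d * real n)" if "i < n" for i
  proof -
    have "2 \<le> d" using hessian_det_nonzero_imp_deg_ge_2[OF c _ hx] d that by simp
    then have "d * n = n * (d - 2) + 2 * n" by (simp add: algebra_simps diff_mult_distrib2)
    then have "n * (d - 2) + 1 \<le> d * n" "2 \<le> d * n"
      using that by linarith+
    then show ?thesis
      using bl_of_nat_le_twice_log[of "m i" "d * n"] m[OF that] that by (simp add: a_def)
  qed
  have "real_of_int (bl_vec n a) \<le> (\<Sum>i<n. 2 * log 2 (real d * real n))"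
    unfolding bl_vec_def of_int_sum by (intro sum_mono bl_a) simp
  moreover have "hessian_det n c (\<lambda>i. real_of_int (a i)) \<noteq> 0"
    using hm hessian_det_cong[of n "\<lambda>i. real_of_int (a i)" "\<lambda>i. real (m i)"] by (simp add: a_def)
  ultimately show "\<exists>a. (\<forall>i\<ge>n. a i = 0) \<and>
      real_of_int (bl_vec n a) \<le> 2 * real n * log 2 (real d * real n) \<and>
      hessian_det n c (\<lambda>i. real_of_int (a i)) \<noteq> 0"
    by (intro exI[of _ a]) (simp add: a_def)
qed

end
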